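(* Let $B$ be a finite Blaschke product of degree $n\ge 1$, and let $M=M(B)$, $m=m(B)$. Then \[ \frac{n}{M-n+1}\le m\le n-1+\frac{n}{M} \qquad\text{and}\qquad 0<m\le n\le M . \]
   Context: A finite Blaschke product of degree $n$ is a function $B(z)=\alpha\prod_{k=1}^n \frac{z-a_k}{1-\overline{a_k}z}$ with $a_1,\dots,a_n\in\mathbb D=\{|z|<1\}$ and $\alpha\in\mathbb T=\{|z|=1\}$. For such $B$, $M(B)=\sup_{|z|=1}|B'(z)|$ and $m(B)=\inf_{|z|=1}|B'(z)|$. *)

theory Defs
  imports "HOL-Complex_Analysis.Complex_Analysis"
begin

definition blaschke :: "complex \<Rightarrow> complex list \<Rightarrow> complex \<Rightarrow> complex" where
  "blaschke \<alpha> a z = \<alpha> * (\<Prod>k<length a. (z - a ! k) / (1 - cnj (a ! k) * z))"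

definition is_blaschke :: "complex \<Rightarrow> complex list \<Rightarrow> bool" where
  "is_blaschke \<alpha> a \<longleftrightarrow> norm \<alpha> = 1 \<and> (\<forall>k<length a. norm (a ! k) < 1)"

definition blaschke_M :: "(complex \<Rightarrow> complex) \<Rightarrow> real" where
  "blaschke_M B = (SUP z\<in>sphere 0 1. norm (deriv B z))"

definition blaschke_m :: "(complex \<Rightarrow> complex) \<Rightarrow> real" where
  "blaschke_m B = (INF z\<in>sphere 0 1. norm (deriv B z))"

end

(* Write B = alpha A / D with A(z) = prod (z - a_k) and D(z) = prod (1 - cnj a_k z). On the unit
   circle |B'(z)| equals the Poisson sum P(z) = sum_k (1 - |a_k|^2) / |z - a_k|^2. For w on the circle
   choose eta = w A(w) / D(w); then the n + 1 roots of z A(z) - eta D(z) all lie on the circle, are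
   simple, and include w, and the partial fraction expansion of D(z) / (z (z A(z) - eta D(z))) yields
   sum_r 1 / (1 + P(r)) = 1 over these roots. Comparing the n terms with r ~= w to 1 / (1 + M) and
   1 / (1 + m) gives n <= M, m <= n and bounds on P(w) in terms of M and m; taking the infimum and
   supremum over w gives the two inequalities. *)

theory Submission
  imports Defs "HOL-Computational_Algebra.Fundamental_Theorem_Algebra"
begin

lemma sum_div_prod_diff_eq_0:
  fixes R :: "'a::field set" and p :: "'a poly"
  assumes fin: "finite R" and deg: "degree p + 2 \<le> card R"
  shows "(\<Sum>x\<in>R. poly p x / (\<Prod>y\<in>R-{x}. x - y)) = 0"
proof -
  \<comment> \<open>The sum is the top coefficient (degree card R - 1) of the Lagrange
      interpolant of p at R, which is p itself.\<close>
  define c where "c x = poly p x / (\<Prod>y\<in>R-{x}. x - y)" for x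
  define L where "L = (\<Sum>x\<in>R. smult (c x) (\<Prod>y\<in>R-{x}. [:-y, 1:]))"
  have degree_basis: "degree (\<Prod>y\<in>R-{x}. [:-y, 1:]) = card R - 1" if "x \<in> R" for x
    using fin that by (subst degree_prod_sum_eq) (auto simp: card_Diff_singleton)
  have coeff_basis: "coeff (\<Prod>y\<in>R-{x}. [:-y, 1:]) (card R - 1) = 1" if "x \<in> R" for x
  proof -
    have "coeff (\<Prod>y\<in>R-{x}. [:-y, 1:]) (card R - 1) = lead_coeff (\<Prod>y\<in>R-{x}. [:-y, 1:])"
      by (simp only: degree_basis[OF that])
    then show ?thesis by (simp add: lead_coeff_prod)
  qed
  have poly_L: "poly L z = poly p z" if "z \<in> R" for z
  proof -
    have "poly L z = (\<Sum>x\<in>R. c x * (\<Prod>y\<in>R-{x}. z - y))"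
      by (simp add: L_def poly_sum poly_prod)
    also have "\<dots> = c z * (\<Prod>y\<in>R-{z}. z - y)"
      using fin that by (subst sum.remove) (auto intro!: sum.neutral simp: prod_zero_iff)
    also have "\<dots> = poly p z"
      using fin by (simp add: c_def prod_zero_iff)
    finally show ?thesis .
  qed
  have "degree L \<le> card R - 1"
    unfolding L_def using fin
    by (intro degree_sum_le) (auto intro: order.trans[OF degree_smult_le] simp: degree_basis)
  then have "L = p"
    using deg by (intro poly_eqI_degree[of R]) (auto simp: poly_L)
  then have "(\<Sum>x\<in>R. c x) = coeff p (card R - 1)"
    using coeff_basis by (auto simp: L_def coeff_sum intro!: sum.cong)
  also have "\<dots> = 0"
    using deg by (intro coeff_eq_0) linarith
  finally show ?thesis by (simp add: c_def)
qed

lemma poly_pderiv_prod_linear: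
  fixes R :: "'a::idom set"
  assumes "finite R" "x \<in> R"
  shows "poly (pderiv (\<Prod>y\<in>R. [:-y, 1:])) x = (\<Prod>y\<in>R-{x}. x - y)"
proof -
  have "poly (pderiv (\<Prod>y\<in>R. [:-y, 1:])) x = (\<Sum>z\<in>R. \<Prod>y\<in>R-{z}. x - y)"
    by (simp add: pderiv_prod poly_sum poly_prod pderiv_pCons)
  also have "\<dots> = (\<Prod>y\<in>R-{x}. x - y)"
    using assms by (subst sum.remove) (auto intro!: sum.neutral simp: prod_zero_iff)
  finally show ?thesis .
qed

lemma norm_diff_sq_sub_norm_one_sub_cnj_mult_sq:
  fixes z b :: complex
  shows "(cmod (z - b))\<^sup>2 - (cmod (1 - cnj b * z))\<^sup>2 = ((cmod z)\<^sup>2 - 1) * (1 - (cmod b)\<^sup>2)"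
  by (simp add: cmod_power2) (simp add: power2_eq_square algebra_simps)

lemma norm_diff_le_norm_one_sub_cnj_mult:
  fixes z b :: complex
  assumes "cmod z \<le> 1" "cmod b \<le> 1"
  shows "cmod (z - b) \<le> cmod (1 - cnj b * z)"
proof (rule power2_le_imp_le)
  have "(cmod z)\<^sup>2 \<le> 1" "(cmod b)\<^sup>2 \<le> 1"
    using assms by (simp_all add: power_le_one)
  then have "((cmod z)\<^sup>2 - 1) * (1 - (cmod b)\<^sup>2) \<le> 0"
    by (intro mult_nonpos_nonneg) simp_all
  then show "(cmod (z - b))\<^sup>2 \<le> (cmod (1 - cnj b * z))\<^sup>2"
    using norm_diff_sq_sub_norm_one_sub_cnj_mult_sq[of z b] by linarith
qed simp

lemma norm_one_sub_cnj_mult_le_norm_diff: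
  fixes z b :: complex
  assumes "1 \<le> cmod z" "cmod b \<le> 1"
  shows "cmod (1 - cnj b * z) \<le> cmod (z - b)"
proof (rule power2_le_imp_le)
  have "1 \<le> (cmod z)\<^sup>2" "(cmod b)\<^sup>2 \<le> 1"
    using assms by (simp_all add: one_le_power power_le_one)
  then have "0 \<le> ((cmod z)\<^sup>2 - 1) * (1 - (cmod b)\<^sup>2)"
    by (intro mult_nonneg_nonneg) simp_all
  then show "(cmod (1 - cnj b * z))\<^sup>2 \<le> (cmod (z - b))\<^sup>2"
    using norm_diff_sq_sub_norm_one_sub_cnj_mult_sq[of z b] by linarith
qed simp

lemma one_sub_cnj_mult_nonzero:
  fixes z b :: complex
  assumes "cmod z \<le> 1" "cmod b < 1"
  shows "1 - cnj b * z \<noteq> 0"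
proof
  assume "1 - cnj b * z = 0"
  then have "1 = cmod (cnj b * z)" by simp
  also have "\<dots> = cmod b * cmod z" by (simp add: norm_mult)
  also have "\<dots> \<le> cmod b" using assms(1) by (simp add: mult_left_le)
  finally show False using assms(2) by simp
qed

text \<open>The left-hand side is z times the logarithmic derivative of the Blaschke factor
  (z - b) / (1 - cnj b * z).\<close>
lemma log_deriv_blaschke_factor_on_circle:
  fixes z b :: complex
  assumes "cmod z = 1" "z \<noteq> b"
  shows "z / (z - b) + z * cnj b / (1 - cnj b * z) = of_real ((1 - (cmod b)\<^sup>2) / (cmod (z - b))\<^sup>2)"
proof -
  have z_cnj: "z * cnj z = 1"
    using assms(1) by (simp add: complex_norm_square[symmetric])
  have nonzero: "z \<noteq> 0" "z - b \<noteq> 0" "cnj (z - b) \<noteq> 0"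
    using assms by auto
  have "1 - cnj b * z = z * cnj (z - b)"
    using z_cnj by (simp add: algebra_simps)
  then have "z / (z - b) + z * cnj b / (1 - cnj b * z) = z / (z - b) + cnj b / cnj (z - b)"
    using nonzero by simp
  also have "\<dots> = (z * cnj (z - b) + cnj b * (z - b)) / ((z - b) * cnj (z - b))"
    using nonzero by (simp add: field_simps)
  also have "z * cnj (z - b) + cnj b * (z - b) = 1 - b * cnj b"
    using z_cnj by (simp add: algebra_simps)
  also have "\<dots> = of_real (1 - (cmod b)\<^sup>2)"
    using complex_norm_square[of b] by simp
  also have "(z - b) * cnj (z - b) = of_real ((cmod (z - b))\<^sup>2)"
    using complex_norm_square[of "z - b"] by simp
  finally show ?thesis by simp
qed

definition blaschke_num :: "complex list \<Rightarrow> complex poly" where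
  "blaschke_num a = (\<Prod>k<length a. [:- (a ! k), 1:])"

definition blaschke_den :: "complex list \<Rightarrow> complex poly" where
  "blaschke_den a = (\<Prod>k<length a. [:1, - cnj (a ! k):])"

definition poisson_sum :: "complex list \<Rightarrow> complex \<Rightarrow> real" where
  "poisson_sum a z = (\<Sum>k<length a. (1 - (cmod (a ! k))\<^sup>2) / (cmod (z - a ! k))\<^sup>2)"

lemma poly_blaschke_num: "poly (blaschke_num a) = (\<lambda>z. \<Prod>k<length a. z - a ! k)"
  by (simp add: blaschke_num_def poly_prod fun_eq_iff)

lemma poly_blaschke_den: "poly (blaschke_den a) = (\<lambda>z. \<Prod>k<length a. 1 - cnj (a ! k) * z)"
  by (simp add: blaschke_den_def poly_prod fun_eq_iff algebra_simps)

lemma blaschke_eq_poly_div: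
  "blaschke \<alpha> a = (\<lambda>z. \<alpha> * poly (blaschke_num a) z / poly (blaschke_den a) z)"
  by (simp add: fun_eq_iff blaschke_def poly_blaschke_num poly_blaschke_den prod_dividef)

lemma degree_blaschke_num: "degree (blaschke_num a) = length a"
  unfolding blaschke_num_def by (subst degree_prod_sum_eq) auto

lemma lead_coeff_blaschke_num: "lead_coeff (blaschke_num a) = 1"
  unfolding blaschke_num_def by (simp add: lead_coeff_prod)

lemma degree_blaschke_den_le: "degree (blaschke_den a) \<le> length a"
proof -
  have "degree (blaschke_den a) \<le> (\<Sum>k<length a. degree [:1, - cnj (a ! k):])"
    unfolding blaschke_den_def
    using degree_prod_sum_le[of "{..<length a}" "\<lambda>k. [:1, - cnj (a ! k):]"] by (simp add: o_def)
  also have "\<dots> \<le> (\<Sum>k<length a. 1)"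
    by (intro sum_mono) simp
  finally show ?thesis by simp
qed

lemma poly_pderiv_blaschke_num:
  assumes "\<forall>k<length a. z \<noteq> a ! k"
  shows "poly (pderiv (blaschke_num a)) z
         = poly (blaschke_num a) z * (\<Sum>k<length a. 1 / (z - a ! k))"
proof -
  have "(poly (blaschke_num a) has_field_derivative
          poly (blaschke_num a) z * (\<Sum>k<length a. 1 / (z - a ! k))) (at z)"
    unfolding poly_blaschke_num
    by (rule has_field_derivative_prod') (use assms in \<open>auto intro!: derivative_eq_intros\<close>)
  then show ?thesis
    by (rule DERIV_unique[OF poly_DERIV])
qed

lemma poly_pderiv_blaschke_den:
  assumes "\<forall>k<length a. 1 - cnj (a ! k) * z \<noteq> 0"
  shows "poly (pderiv (blaschke_den a)) z
         = poly (blaschke_den a) z * (\<Sum>k<length a. - cnj (a ! k) / (1 - cnj (a ! k) * z))"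
proof -
  have "(poly (blaschke_den a) has_field_derivative
          poly (blaschke_den a) z * (\<Sum>k<length a. - cnj (a ! k) / (1 - cnj (a ! k) * z))) (at z)"
    unfolding poly_blaschke_den
    by (rule has_field_derivative_prod') (use assms in \<open>auto intro!: derivative_eq_intros\<close>)
  then show ?thesis
    by (rule DERIV_unique[OF poly_DERIV])
qed

text \<open>Its roots are the solutions of z B(z) = alpha eta.\<close>
definition blaschke_level_poly :: "complex list \<Rightarrow> complex \<Rightarrow> complex poly" where
  "blaschke_level_poly a \<eta> = pCons 0 (blaschke_num a) - smult \<eta> (blaschke_den a)"

lemma poly_blaschke_level_poly:
  "poly (blaschke_level_poly a \<eta>) z = z * poly (blaschke_num a) z - \<eta> * poly (blaschke_den a) z"
  by (simp add: blaschke_level_poly_def)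

lemma coeff_blaschke_level_poly_top: "coeff (blaschke_level_poly a \<eta>) (Suc (length a)) = 1"
proof -
  have "coeff (blaschke_den a) (Suc (length a)) = 0"
    using degree_blaschke_den_le[of a] by (intro coeff_eq_0) simp
  then show ?thesis
    using lead_coeff_blaschke_num[of a] by (simp add: blaschke_level_poly_def degree_blaschke_num)
qed

lemma degree_blaschke_level_poly: "degree (blaschke_level_poly a \<eta>) = Suc (length a)"
proof (rule antisym)
  have "degree (pCons 0 (blaschke_num a)) \<le> Suc (length a)"
    using degree_pCons_le[of 0 "blaschke_num a"] by (simp add: degree_blaschke_num)
  moreover have "degree (smult \<eta> (blaschke_den a)) \<le> Suc (length a)"
    using degree_blaschke_den_le[of a] degree_smult_le[of \<eta> "blaschke_den a"] by linarith
  ultimately show "degree (blaschke_level_poly a \<eta>) \<le> Suc (length a)"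
    unfolding blaschke_level_poly_def using degree_diff_le by blast
  show "Suc (length a) \<le> degree (blaschke_level_poly a \<eta>)"
    using coeff_blaschke_level_poly_top[of a \<eta>] by (intro le_degree) simp
qed

lemma lead_coeff_blaschke_level_poly: "lead_coeff (blaschke_level_poly a \<eta>) = 1"
  by (simp add: degree_blaschke_level_poly coeff_blaschke_level_poly_top)

lemma finite_roots_blaschke_level_poly: "finite {r. poly (blaschke_level_poly a \<eta>) r = 0}"
proof (rule poly_roots_finite)
  show "blaschke_level_poly a \<eta> \<noteq> 0"
    using degree_blaschke_level_poly[of a \<eta>] by auto
qed

context
  fixes a :: "complex list"
  assumes zeros_in_disc: "\<forall>k<length a. cmod (a ! k) < 1"
begin

lemma poly_blaschke_num_nonzero:
  assumes "1 \<le> cmod z"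
  shows "poly (blaschke_num a) z \<noteq> 0"
  using zeros_in_disc assms by (force simp: poly_blaschke_num prod_zero_iff)

lemma poly_blaschke_den_nonzero:
  assumes "cmod z \<le> 1"
  shows "poly (blaschke_den a) z \<noteq> 0"
  using zeros_in_disc one_sub_cnj_mult_nonzero[OF assms]
  by (simp add: poly_blaschke_den prod_zero_iff)

lemma norm_poly_blaschke_num_le_den:
  assumes "cmod z \<le> 1"
  shows "cmod (poly (blaschke_num a) z) \<le> cmod (poly (blaschke_den a) z)"
  unfolding poly_blaschke_num poly_blaschke_den prod_norm[symmetric]
  using zeros_in_disc assms
  by (intro prod_mono) (auto intro: norm_diff_le_norm_one_sub_cnj_mult less_imp_le)

lemma norm_poly_blaschke_den_le_num:
  assumes "1 \<le> cmod z"
  shows "cmod (poly (blaschke_den a) z) \<le> cmod (poly (blaschke_num a) z)"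
  unfolding poly_blaschke_num poly_blaschke_den prod_norm[symmetric]
  using zeros_in_disc assms
  by (intro prod_mono) (auto intro: norm_one_sub_cnj_mult_le_norm_diff less_imp_le)

lemma norm_poly_blaschke_num_eq_den:
  assumes "cmod z = 1"
  shows "cmod (poly (blaschke_num a) z) = cmod (poly (blaschke_den a) z)"
  using assms by (intro antisym norm_poly_blaschke_num_le_den norm_poly_blaschke_den_le_num) simp_all

lemma poisson_sum_nonneg: "0 \<le> poisson_sum a z"
  unfolding poisson_sum_def using zeros_in_disc
  by (intro sum_nonneg divide_nonneg_nonneg) (auto simp: abs_square_le_1 less_imp_le)

lemma one_plus_poisson_sum_nonzero: "1 + complex_of_real (poisson_sum a z) \<noteq> 0"
proof
  assume "1 + complex_of_real (poisson_sum a z) = 0"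
  then have "complex_of_real (1 + poisson_sum a z) = 0" by simp
  then have "1 + poisson_sum a z = 0" by (simp only: of_real_eq_0_iff)
  with poisson_sum_nonneg[of z] show False by simp
qed

lemma blaschke_wronskian_on_circle:
  assumes z: "cmod z = 1"
  shows "z * (poly (pderiv (blaschke_num a)) z * poly (blaschke_den a) z
              - poly (blaschke_num a) z * poly (pderiv (blaschke_den a)) z)
         = of_real (poisson_sum a z) * poly (blaschke_num a) z * poly (blaschke_den a) z"
proof -
  define S1 where "S1 = (\<Sum>k<length a. 1 / (z - a ! k))"
  define S2 where "S2 = (\<Sum>k<length a. - cnj (a ! k) / (1 - cnj (a ! k) * z))"
  have off_zeros: "z \<noteq> a ! k" if "k < length a" for k
    using zeros_in_disc z that by auto
  have off_poles: "1 - cnj (a ! k) * z \<noteq> 0" if "k < length a" for k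
    using zeros_in_disc z that by (intro one_sub_cnj_mult_nonzero) auto
  have "z * (S1 - S2) = (\<Sum>k<length a. z / (z - a ! k) + z * cnj (a ! k) / (1 - cnj (a ! k) * z))"
    by (simp add: S1_def S2_def sum_distrib_left sum_subtractf[symmetric] algebra_simps)
  also have "\<dots> = of_real (poisson_sum a z)"
    using off_zeros z
    by (simp add: poisson_sum_def log_deriv_blaschke_factor_on_circle)
  finally have "z * (S1 - S2) = of_real (poisson_sum a z)" .
  moreover have "z * (poly (pderiv (blaschke_num a)) z * poly (blaschke_den a) z
              - poly (blaschke_num a) z * poly (pderiv (blaschke_den a)) z)
      = poly (blaschke_num a) z * poly (blaschke_den a) z * (z * (S1 - S2))"
    using off_zeros off_poles
    by (simp add: S1_def S2_def poly_pderiv_blaschke_num poly_pderiv_blaschke_den algebra_simps)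
  ultimately show ?thesis by simp
qed

lemma norm_deriv_blaschke_on_circle:
  assumes \<alpha>: "cmod \<alpha> = 1" and z: "cmod z = 1"
  shows "norm (deriv (blaschke \<alpha> a) z) = poisson_sum a z"
proof -
  define A D where "A = poly (blaschke_num a)" and "D = poly (blaschke_den a)"
  define A' D' where "A' = poly (pderiv (blaschke_num a))" and "D' = poly (pderiv (blaschke_den a))"
  have D: "D z \<noteq> 0" and "z \<noteq> 0"
    using poly_blaschke_den_nonzero z by (auto simp: D_def)
  have "(blaschke \<alpha> a has_field_derivative \<alpha> * (A' z * D z - A z * D' z) / (D z * D z)) (at z)"
    unfolding blaschke_eq_poly_div
    using poly_DERIV[of "blaschke_num a" z] poly_DERIV[of "blaschke_den a" z] D
    by (auto intro!: derivative_eq_intros simp: A_def D_def A'_def D'_def algebra_simps)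
  then have "deriv (blaschke \<alpha> a) z = \<alpha> * (A' z * D z - A z * D' z) / (D z * D z)"
    by (rule DERIV_imp_deriv)
  also have "A' z * D z - A z * D' z = z * (A' z * D z - A z * D' z) / z"
    using \<open>z \<noteq> 0\<close> by simp
  also have "\<dots> = of_real (poisson_sum a z) * A z * D z / z"
    using blaschke_wronskian_on_circle[OF z] by (simp add: A_def D_def A'_def D'_def)
  also have "\<alpha> * (of_real (poisson_sum a z) * A z * D z / z) / (D z * D z)
      = \<alpha> * of_real (poisson_sum a z) * A z / (z * D z)"
    using D \<open>z \<noteq> 0\<close> by (simp add: field_simps)
  finally show ?thesis
    using \<alpha> z D norm_poly_blaschke_num_eq_den[OF z] poisson_sum_nonneg
    by (simp add: A_def D_def norm_mult norm_divide)
qed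

lemma blaschke_level_poly_root_on_circle:
  assumes \<eta>: "cmod \<eta> = 1" and root: "poly (blaschke_level_poly a \<eta>) r = 0"
  shows "cmod r = 1"
proof (rule ccontr)
  define A D where "A = cmod (poly (blaschke_num a) r)" and "D = cmod (poly (blaschke_den a) r)"
  have "r * poly (blaschke_num a) r = \<eta> * poly (blaschke_den a) r"
    using root by (simp add: poly_blaschke_level_poly)
  then have norm_eq: "cmod r * A = D"
    using \<eta> unfolding A_def D_def by (metis norm_mult mult_1)
  assume "cmod r \<noteq> 1"
  then consider "cmod r < 1" | "1 < cmod r" by linarith
  then show False
  proof cases
    case 1
    have "0 < D"
      using poly_blaschke_den_nonzero 1 by (simp add: D_def)
    have "D = cmod r * A" using norm_eq by simp
    also have "\<dots> \<le> cmod r * D"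
      using norm_poly_blaschke_num_le_den 1 by (simp add: A_def D_def mult_left_mono)
    also have "\<dots> < D" using 1 \<open>0 < D\<close> by simp
    finally show False by simp
  next
    case 2
    have "0 < A"
      using poly_blaschke_num_nonzero 2 by (simp add: A_def)
    then have "A < cmod r * A" using 2 by simp
    also have "\<dots> = D" by (fact norm_eq)
    also have "\<dots> \<le> A"
      using norm_poly_blaschke_den_le_num 2 by (simp add: A_def D_def)
    finally show False by simp
  qed
qed

lemma poly_pderiv_blaschke_level_poly_at_root:
  assumes r: "cmod r = 1" and root: "poly (blaschke_level_poly a \<eta>) r = 0"
  shows "poly (pderiv (blaschke_level_poly a \<eta>)) r
         = poly (blaschke_num a) r * (1 + of_real (poisson_sum a r))"
proof -
  define A D where "A = poly (blaschke_num a) r" and "D = poly (blaschke_den a) r"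
  define A' D' where "A' = poly (pderiv (blaschke_num a)) r" and "D' = poly (pderiv (blaschke_den a)) r"
  have "D \<noteq> 0"
    using poly_blaschke_den_nonzero r by (simp add: D_def)
  have root': "\<eta> * D = r * A"
    using root by (simp add: A_def D_def poly_blaschke_level_poly)
  have "D * poly (pderiv (blaschke_level_poly a \<eta>)) r = D * A + r * A' * D - (\<eta> * D) * D'"
    by (simp add: blaschke_level_poly_def pderiv_diff pderiv_pCons pderiv_smult
        A_def D_def A'_def D'_def algebra_simps)
  also have "\<dots> = D * A + r * (A' * D - A * D')"
    unfolding root' by (simp add: algebra_simps)
  also have "\<dots> = D * (A * (1 + of_real (poisson_sum a r)))"
    using blaschke_wronskian_on_circle[OF r] by (simp add: A_def D_def A'_def D'_def algebra_simps)
  finally show ?thesis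
    using \<open>D \<noteq> 0\<close> by (simp add: A_def)
qed

lemma rsquarefree_blaschke_level_poly:
  assumes "cmod \<eta> = 1"
  shows "rsquarefree (blaschke_level_poly a \<eta>)"
  unfolding rsquarefree_roots
proof (intro allI notI)
  fix r
  assume r: "poly (blaschke_level_poly a \<eta>) r = 0 \<and> poly (pderiv (blaschke_level_poly a \<eta>)) r = 0"
  then have "cmod r = 1"
    using blaschke_level_poly_root_on_circle[OF assms] by blast
  moreover have "poly (pderiv (blaschke_level_poly a \<eta>)) r
      = poly (blaschke_num a) r * (1 + of_real (poisson_sum a r))"
    using poly_pderiv_blaschke_level_poly_at_root[of r \<eta>] \<open>cmod r = 1\<close> r by blast
  ultimately show False
    using r poly_blaschke_num_nonzero[of r] one_plus_poisson_sum_nonzero[of r] by simp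
qed

lemma blaschke_level_poly_eq_prod_roots:
  assumes "cmod \<eta> = 1"
  shows "blaschke_level_poly a \<eta> = (\<Prod>r | poly (blaschke_level_poly a \<eta>) r = 0. [:-r, 1:])"
  using complex_poly_decompose_rsquarefree[OF rsquarefree_blaschke_level_poly[OF assms]]
  by (simp add: lead_coeff_blaschke_level_poly)

lemma card_roots_blaschke_level_poly:
  assumes "cmod \<eta> = 1"
  shows "card {r. poly (blaschke_level_poly a \<eta>) r = 0} = Suc (length a)"
proof -
  have "Suc (length a) = degree (\<Prod>r | poly (blaschke_level_poly a \<eta>) r = 0. [:-r, 1:])"
    using degree_blaschke_level_poly[of a \<eta>] blaschke_level_poly_eq_prod_roots[OF assms] by simp
  also have "\<dots> = card {r. poly (blaschke_level_poly a \<eta>) r = 0}"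
    by (subst degree_prod_sum_eq) auto
  finally show ?thesis by simp
qed

lemma prod_diff_level_roots:
  assumes \<eta>: "cmod \<eta> = 1" and root: "poly (blaschke_level_poly a \<eta>) x = 0"
  defines "R \<equiv> {r. poly (blaschke_level_poly a \<eta>) r = 0}"
  shows "x * (\<Prod>y\<in>R - {x}. x - y)
         = \<eta> * poly (blaschke_den a) x * (1 + of_real (poisson_sum a x))"
proof -
  have "(\<Prod>y\<in>R - {x}. x - y) = poly (pderiv (\<Prod>y\<in>R. [:-y, 1:])) x"
    using finite_roots_blaschke_level_poly root by (simp add: R_def poly_pderiv_prod_linear)
  also have "(\<Prod>y\<in>R. [:-y, 1:]) = blaschke_level_poly a \<eta>"
    using blaschke_level_poly_eq_prod_roots[OF \<eta>] by (simp add: R_def)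
  also have "poly (pderiv (blaschke_level_poly a \<eta>)) x
      = poly (blaschke_num a) x * (1 + of_real (poisson_sum a x))"
    using root blaschke_level_poly_root_on_circle[OF \<eta> root]
    by (simp add: poly_pderiv_blaschke_level_poly_at_root)
  finally show ?thesis
    using root by (simp add: poly_blaschke_level_poly algebra_simps)
qed

lemma sum_inverse_one_plus_poisson_sum_level_roots:
  assumes \<eta>: "cmod \<eta> = 1"
  defines "R \<equiv> {r. poly (blaschke_level_poly a \<eta>) r = 0}"
  shows "(\<Sum>r\<in>R. 1 / (1 + poisson_sum a r)) = 1"
proof -
  define Q where "Q = blaschke_level_poly a \<eta>"
  define D where "D = poly (blaschke_den a)"
  have "finite R"
    unfolding R_def by (rule finite_roots_blaschke_level_poly)
  have Q_eq: "Q = (\<Prod>y\<in>R. [:-y, 1:])"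
    using blaschke_level_poly_eq_prod_roots[OF \<eta>] by (simp add: Q_def R_def)
  have Q_0: "poly Q 0 = - \<eta>"
    by (simp add: Q_def poly_blaschke_level_poly poly_blaschke_den)
  then have "0 \<notin> R"
    using \<eta> by (auto simp: R_def Q_def)
  have on_circle: "cmod r = 1" if "r \<in> R" for r
    using blaschke_level_poly_root_on_circle[OF \<eta>] that by (simp add: R_def)
  \<comment> \<open>Partial fractions of D / (z Q) at its simple poles 0 and R.\<close>
  have lagrange: "(\<Sum>x\<in>insert 0 R. D x / (\<Prod>y\<in>insert 0 R - {x}. x - y)) = 0"
    unfolding D_def
    using degree_blaschke_den_le[of a] \<open>finite R\<close> \<open>0 \<notin> R\<close> card_roots_blaschke_level_poly[OF \<eta>]
    by (simp add: sum_div_prod_diff_eq_0 R_def)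
  have term_0: "\<eta> * (D 0 / (\<Prod>y\<in>insert 0 R - {0}. 0 - y)) = - 1"
  proof -
    have "(\<Prod>y\<in>insert 0 R - {0}. 0 - y) = poly Q 0"
      using \<open>0 \<notin> R\<close> by (subst Q_eq) (simp add: poly_prod)
    then show ?thesis
      using Q_0 \<eta> by (auto simp: D_def poly_blaschke_den)
  qed
  have term_root: "\<eta> * (D x / (\<Prod>y\<in>insert 0 R - {x}. x - y)) = 1 / (1 + of_real (poisson_sum a x))"
    if x: "x \<in> R" for x
  proof -
    have "x \<noteq> 0" using x \<open>0 \<notin> R\<close> by auto
    then have "(\<Prod>y\<in>insert 0 R - {x}. x - y) = x * (\<Prod>y\<in>R - {x}. x - y)"
      using \<open>finite R\<close> \<open>0 \<notin> R\<close> by (simp add: insert_Diff_if)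
    also have "\<dots> = \<eta> * D x * (1 + of_real (poisson_sum a x))"
      using x by (simp add: R_def D_def prod_diff_level_roots[OF \<eta>])
    finally show ?thesis
      using poly_blaschke_den_nonzero[of x] on_circle[OF x] one_plus_poisson_sum_nonzero[of x] \<eta>
      by (auto simp: D_def)
  qed
  have "- 1 + (\<Sum>x\<in>R. 1 / (1 + of_real (poisson_sum a x)))
      = \<eta> * (D 0 / (\<Prod>y\<in>insert 0 R - {0}. 0 - y))
        + (\<Sum>x\<in>R. \<eta> * (D x / (\<Prod>y\<in>insert 0 R - {x}. x - y)))"
    by (simp only: term_0 term_root cong: sum.cong)
  also have "\<dots> = \<eta> * (\<Sum>x\<in>insert 0 R. D x / (\<Prod>y\<in>insert 0 R - {x}. x - y))"
    using \<open>finite R\<close> \<open>0 \<notin> R\<close> by (simp add: sum_distrib_left distrib_left)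
  also have "\<dots> = 0"
    by (simp only: lagrange mult_zero_right)
  finally have "- 1 + (\<Sum>x\<in>R. 1 / (1 + complex_of_real (poisson_sum a x))) = 0" .
  then have "complex_of_real (\<Sum>x\<in>R. 1 / (1 + poisson_sum a x)) = 1"
    by simp
  then show ?thesis
    by (simp only: of_real_eq_1_iff)
qed

lemma poisson_sum_reciprocal_partition:
  assumes w: "cmod w = 1"
  shows "\<exists>R. finite R \<and> R \<subseteq> sphere 0 1 \<and> w \<in> R \<and> card R = Suc (length a)
             \<and> (\<Sum>r\<in>R. 1 / (1 + poisson_sum a r)) = 1"
proof -
  define \<eta> where "\<eta> = w * poly (blaschke_num a) w / poly (blaschke_den a) w"
  have "poly (blaschke_den a) w \<noteq> 0"
    using poly_blaschke_den_nonzero w by simp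
  then have \<eta>: "cmod \<eta> = 1" and "poly (blaschke_level_poly a \<eta>) w = 0"
    using w norm_poly_blaschke_num_eq_den[OF w]
    by (simp_all add: \<eta>_def poly_blaschke_level_poly norm_mult norm_divide)
  then show ?thesis
    using finite_roots_blaschke_level_poly card_roots_blaschke_level_poly[OF \<eta>]
      sum_inverse_one_plus_poisson_sum_level_roots[OF \<eta>]
      blaschke_level_poly_root_on_circle[OF \<eta>]
    by (intro exI[of _ "{r. poly (blaschke_level_poly a \<eta>) r = 0}"]) auto
qed

lemma bdd_above_poisson_sum_sphere: "bdd_above (poisson_sum a ` sphere 0 1)"
proof -
  have "continuous_on (sphere 0 1) (poisson_sum a)"
  proof -
    have "\<forall>z\<in>sphere 0 1. (cmod (z - a ! k))\<^sup>2 \<noteq> 0" if "k < length a" for k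
      using zeros_in_disc that by fastforce
    then show ?thesis
      unfolding poisson_sum_def[abs_def] by (auto intro!: continuous_intros)
  qed
  then show ?thesis
    by (intro bounded_imp_bdd_above compact_imp_bounded compact_continuous_image) auto
qed

end

lemma reciprocal_sum_le_one_imp:
  fixes p M n :: real
  assumes "0 \<le> p" "p \<le> M" and sum_le: "1 / (1 + p) + n / (1 + M) \<le> 1"
  shows "n \<le> M" and "n / (M - n + 1) \<le> p"
proof -
  have pos: "0 < 1 + p" "0 < 1 + M" using assms by auto
  then have "1 / (1 + p) + n / (1 + M) = (1 + M + n * (1 + p)) / ((1 + p) * (1 + M))"
    by (simp add: field_simps)
  then have "1 + M + n * (1 + p) \<le> (1 + p) * (1 + M)"
    using sum_le pos by (simp add: pos_divide_le_eq)
  then have key: "n * (1 + p) \<le> p * (1 + M)"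
    by (simp add: algebra_simps)
  show "n \<le> M"
  proof (rule ccontr)
    assume "\<not> n \<le> M"
    then have "M * (1 + p) < n * (1 + p)"
      using pos by (intro mult_strict_right_mono) auto
    with key \<open>p \<le> M\<close> show False
      by (simp add: algebra_simps)
  qed
  with key show "n / (M - n + 1) \<le> p"
    by (simp add: field_simps algebra_simps)
qed

lemma reciprocal_sum_ge_one_imp:
  fixes p m n :: real
  assumes "0 \<le> m" "m \<le> p" and sum_ge: "1 \<le> 1 / (1 + p) + n / (1 + m)"
  shows "m \<le> n" and "p * (1 + m - n) \<le> n"
proof -
  have pos: "0 < 1 + p" "0 < 1 + m" using assms by auto
  then have "1 / (1 + p) + n / (1 + m) = (1 + m + n * (1 + p)) / ((1 + p) * (1 + m))"
    by (simp add: field_simps)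
  then have "(1 + p) * (1 + m) \<le> 1 + m + n * (1 + p)"
    using sum_ge pos by (simp add: pos_le_divide_eq)
  then show key: "p * (1 + m - n) \<le> n"
    by (simp add: algebra_simps)
  show "m \<le> n"
  proof (rule ccontr)
    assume "\<not> m \<le> n"
    then have "0 < p * (m - n) + (m - n)"
      using \<open>0 \<le> m\<close> \<open>m \<le> p\<close> by (intro add_nonneg_pos mult_nonneg_nonneg) auto
    with key \<open>m \<le> p\<close> show False
      by (simp add: algebra_simps)
  qed
qed

lemma reciprocal_partition_bounds:
  fixes P :: "'a \<Rightarrow> real"
  assumes "finite R" "w \<in> R" "card R = Suc n" and sum_eq: "(\<Sum>r\<in>R. 1 / (1 + P r)) = 1"
    and bounds: "\<And>r. r \<in> R \<Longrightarrow> lo \<le> P r \<and> P r \<le> hi" and "0 \<le> lo"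
  shows "1 / (1 + P w) + n / (1 + hi) \<le> 1" and "1 \<le> 1 / (1 + P w) + n / (1 + lo)"
proof -
  have rest: "1 / (1 + P w) + (\<Sum>r\<in>R - {w}. 1 / (1 + P r)) = 1"
    using sum_eq assms(1,2) by (simp add: sum.remove)
  have "card (R - {w}) = n"
    using assms(1-3) by simp
  moreover have "1 / (1 + hi) \<le> 1 / (1 + P r)" "1 / (1 + P r) \<le> 1 / (1 + lo)"
    if "r \<in> R - {w}" for r
    using bounds[of r] that \<open>0 \<le> lo\<close> by (auto intro!: divide_left_mono mult_pos_pos)
  ultimately have "n / (1 + hi) \<le> (\<Sum>r\<in>R - {w}. 1 / (1 + P r))"
    and "(\<Sum>r\<in>R - {w}. 1 / (1 + P r)) \<le> n / (1 + lo)"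
    using sum_mono[of "R - {w}" "\<lambda>_. 1 / (1 + hi)" "\<lambda>r. 1 / (1 + P r)"]
      sum_mono[of "R - {w}" "\<lambda>r. 1 / (1 + P r)" "\<lambda>_. 1 / (1 + lo)"]
    by auto
  with rest show "1 / (1 + P w) + n / (1 + hi) \<le> 1" and "1 \<le> 1 / (1 + P w) + n / (1 + lo)"
    by linarith+
qed

lemma sup_inf_bounds_of_reciprocal_partitions:
  fixes P :: "'a \<Rightarrow> real" and n :: nat
  assumes "S \<noteq> {}" and bdd: "bdd_above (P ` S)" and nonneg: "\<And>z. z \<in> S \<Longrightarrow> 0 \<le> P z"
    and "1 \<le> n"
    and partition: "\<And>w. w \<in> S \<Longrightarrow> \<exists>R. finite R \<and> R \<subseteq> S \<and> w \<in> R \<and> card R = Suc n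
                                    \<and> (\<Sum>r\<in>R. 1 / (1 + P r)) = 1"
  defines "M \<equiv> SUP z\<in>S. P z" and "m \<equiv> INF z\<in>S. P z"
  shows "real n / (M - real n + 1) \<le> m \<and> m \<le> real n - 1 + real n / M
         \<and> 0 < m \<and> m \<le> real n \<and> real n \<le> M"
proof -
  have "0 \<le> m"
    unfolding m_def using \<open>S \<noteq> {}\<close> nonneg by (intro cINF_greatest) auto
  have below: "m \<le> P z" if "z \<in> S" for z
    unfolding m_def using that nonneg by (intro cINF_lower bdd_belowI2) auto
  have above: "P z \<le> M" if "z \<in> S" for z
    unfolding M_def by (rule cSUP_upper[OF that bdd])
  have pointwise: "real n \<le> M \<and> real n / (M - real n + 1) \<le> P w
      \<and> m \<le> real n \<and> P w * (1 + m - real n) \<le> real n" if w: "w \<in> S" for w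
  proof -
    obtain R where R: "finite R" "R \<subseteq> S" "w \<in> R" "card R = Suc n"
        "(\<Sum>r\<in>R. 1 / (1 + P r)) = 1"
      using partition[OF w] by blast
    then have "m \<le> P r \<and> P r \<le> M" if "r \<in> R" for r
      using that below above by blast
    note sums = reciprocal_partition_bounds[OF R(1,3-5) this \<open>0 \<le> m\<close>]
    show ?thesis
      using reciprocal_sum_le_one_imp[OF nonneg[OF w] above[OF w] sums(1)]
        reciprocal_sum_ge_one_imp[OF \<open>0 \<le> m\<close> below[OF w] sums(2)]
      by blast
  qed
  obtain w where "w \<in> S" using \<open>S \<noteq> {}\<close> by blast
  then have "real n \<le> M" "m \<le> real n"
    using pointwise by auto
  have lower: "real n / (M - real n + 1) \<le> m"
    unfolding m_def using \<open>S \<noteq> {}\<close> pointwise by (intro cINF_greatest) auto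
  have upper: "m \<le> real n - 1 + real n / M"
  proof (cases "1 + m - real n \<le> 0")
    case True
    moreover have "0 \<le> real n / M"
      using \<open>real n \<le> M\<close> by simp
    ultimately show ?thesis by linarith
  next
    case False
    have "M \<le> real n / (1 + m - real n)"
      unfolding M_def using \<open>S \<noteq> {}\<close> pointwise False
      by (intro cSUP_least) (auto simp: pos_le_divide_eq)
    then have "1 + m - real n \<le> real n / M"
      using False \<open>1 \<le> n\<close> \<open>real n \<le> M\<close> by (simp add: field_simps)
    then show ?thesis by simp
  qed
  have "0 < real n / (M - real n + 1)"
    using \<open>1 \<le> n\<close> \<open>real n \<le> M\<close> by simp
  with lower have "0 < m" by linarith
  with lower upper \<open>m \<le> real n\<close> \<open>real n \<le> M\<close> show ?thesis
    by blast
qed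

theorem theorem1:
  fixes \<alpha> :: complex and a :: "complex list" and n :: nat
  assumes "is_blaschke \<alpha> a" and "n = length a" and "n \<ge> 1"
  defines "M \<equiv> blaschke_M (blaschke \<alpha> a)" and "m \<equiv> blaschke_m (blaschke \<alpha> a)"
  shows "real n / (M - real n + 1) \<le> m \<and> m \<le> real n - 1 + real n / M
         \<and> 0 < m \<and> m \<le> real n \<and> real n \<le> M"
proof -
  from assms(1) have \<alpha>: "cmod \<alpha> = 1" and zeros: "\<forall>k<length a. cmod (a ! k) < 1"
    by (auto simp: is_blaschke_def)
  have M_eq: "M = (SUP z\<in>sphere 0 1. poisson_sum a z)"
    unfolding M_def blaschke_M_def
    by (intro SUP_cong refl) (simp add: norm_deriv_blaschke_on_circle[OF zeros \<alpha>])
  have m_eq: "m = (INF z\<in>sphere 0 1. poisson_sum a z)"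
    unfolding m_def blaschke_m_def
    by (intro INF_cong refl) (simp add: norm_deriv_blaschke_on_circle[OF zeros \<alpha>])
  have "(1::complex) \<in> sphere 0 1"
    by simp
  then have "sphere (0::complex) 1 \<noteq> {}"
    by blast
  moreover have "0 \<le> poisson_sum a z" if "z \<in> sphere 0 1" for z
    by (rule poisson_sum_nonneg[OF zeros])
  moreover have "\<exists>R. finite R \<and> R \<subseteq> sphere 0 1 \<and> w \<in> R \<and> card R = Suc n
                     \<and> (\<Sum>r\<in>R. 1 / (1 + poisson_sum a r)) = 1" if "w \<in> sphere 0 1" for w
    using poisson_sum_reciprocal_partition[OF zeros, of w] that assms(2) by simp
  ultimately show ?thesis
    unfolding M_eq m_eq
    by (rule sup_inf_bounds_of_reciprocal_partitions[OF _ bdd_above_poisson_sum_sphere[OF zeros] _ \<open>n \<ge> 1\<close>])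
qed

end
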